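(* Fix $\theta$ with $\phi(\theta)<\beta$. If $\tau_1^d(\theta)<\tau_2^d(\theta)$ then $\tau^\star(\theta)\in(\tau_1^d(\theta),\tau_2^d(\theta))$; if $\tau_2^d(\theta)<\tau_1^d(\theta)$ then $\tau^\star(\theta)\in(\tau_2^d(\theta),\tau_1^d(\theta))$.
   Context: Setup. Let $Q\in\{0,1\}$ be a random variable with $\mathbb P(Q=1)=\pi\in(0,1)$, and let $(\Theta,\Gamma)$ be a real-valued random vector whose conditional joint density given $Q=1$ is $h_q$ and given $Q=0$ is $h_u$, both strictly positive on $\mathbb R^2$. Monotone likelihood ratio assumption: $l(\theta,\gamma)=h_q(\theta,\gamma)/h_u(\theta,\gamma)$ is continuous and strictly increasing in each of $\theta$ and $\gamma$, and for each $\theta$ the map $\gamma\mapsto l(\theta,\gamma)$ has infimum $0$ and supremum $+\infty$. Fix payoffs $x_q>0$, $x_u>0$. For $\tau\in(-x_u,x_q)$ let $A(\tau)=\mathbb 1\{l(\Theta,\Gamma)>\frac{(1-\pi)(x_u+\tau)}{\pi(x_q-\tau)}\}$, $s_1(\theta,\tau)=\mathbb E[Q\mid\Theta=\theta,A(\tau)=1]$, $s_2(\theta,\tau)=\mathbb E[A(\tau)\mid\Theta=\theta]$, $\phi(\theta)=\mathbb P(Q=1\mid\Theta=\theta)$. The equalizing prejudice $\tau^\star(\theta)$ is the unique $\tau\in(-x_u,x_q)$ with $s_1(\theta,\tau)=s_2(\theta,\tau)$. Fix a cutoff $c\in(-x_u,x_q)$ and let $\beta=(x_u+c)/(x_q+x_u)\in(0,1)$.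 The critical prejudice $\tau_k^d(\theta)$, $k=1,2$, is the unique $\tau\in(-x_u,x_q)$ with $s_k(\theta,\tau)=\beta$ (it exists for $k=1$ when $\phi(\theta)<\beta$, and always for $k=2$). *)

theory Defs
  imports "HOL-Analysis.Analysis"
begin

text \<open>Joint densities hq (given Q=1) and hu (given Q=0) of (Theta,Gamma) on R^2,
  written curried: h t g is the density at (Theta,Gamma) = (t,g).
  All conditional quantities given Theta = t are computed from the densities
  (Bayes' rule with the sections g \<mapsto> h t g).\<close>

definition lr :: "(real \<Rightarrow> real \<Rightarrow> real) \<Rightarrow> (real \<Rightarrow> real \<Rightarrow> real) \<Rightarrow> real \<Rightarrow> real \<Rightarrow> real" where
  "lr hq hu t g = hq t g / hu t g"

definition thr :: "real \<Rightarrow> real \<Rightarrow> real \<Rightarrow> real \<Rightarrow> real" where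
  "thr p xq xu \<tau> = ((1 - p) * (xu + \<tau>)) / (p * (xq - \<tau>))"

text \<open>Event A(tau) = 1, as a set of values of Gamma for fixed Theta = t.\<close>
definition acc_set :: "real \<Rightarrow> (real \<Rightarrow> real \<Rightarrow> real) \<Rightarrow> (real \<Rightarrow> real \<Rightarrow> real)
    \<Rightarrow> real \<Rightarrow> real \<Rightarrow> real \<Rightarrow> real \<Rightarrow> real set" where
  "acc_set p hq hu xq xu t \<tau> = {g. lr hq hu t g > thr p xq xu \<tau>}"

text \<open>phi(t) = P(Q = 1 | Theta = t).\<close>
definition phi :: "real \<Rightarrow> (real \<Rightarrow> real \<Rightarrow> real) \<Rightarrow> (real \<Rightarrow> real \<Rightarrow> real) \<Rightarrow> real \<Rightarrow> real" where
  "phi p hq hu t =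
     p * (LINT g|lborel. hq t g) /
     (p * (LINT g|lborel. hq t g) + (1 - p) * (LINT g|lborel. hu t g))"

text \<open>s1(t,tau) = E[Q | Theta = t, A(tau) = 1].\<close>
definition s1 :: "real \<Rightarrow> (real \<Rightarrow> real \<Rightarrow> real) \<Rightarrow> (real \<Rightarrow> real \<Rightarrow> real)
    \<Rightarrow> real \<Rightarrow> real \<Rightarrow> real \<Rightarrow> real \<Rightarrow> real" where
  "s1 p hq hu xq xu t \<tau> =
     (let A = acc_set p hq hu xq xu t \<tau> in
      p * (LINT g:A|lborel. hq t g) /
      (p * (LINT g:A|lborel. hq t g) + (1 - p) * (LINT g:A|lborel. hu t g)))"

text \<open>s2(t,tau) = E[A(tau) | Theta = t].\<close>
definition s2 :: "real \<Rightarrow> (real \<Rightarrow> real \<Rightarrow> real) \<Rightarrow> (real \<Rightarrow> real \<Rightarrow> real)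
    \<Rightarrow> real \<Rightarrow> real \<Rightarrow> real \<Rightarrow> real \<Rightarrow> real" where
  "s2 p hq hu xq xu t \<tau> =
     (let A = acc_set p hq hu xq xu t \<tau> in
      (p * (LINT g:A|lborel. hq t g) + (1 - p) * (LINT g:A|lborel. hu t g)) /
      (p * (LINT g|lborel. hq t g) + (1 - p) * (LINT g|lborel. hu t g)))"

definition tau_star :: "real \<Rightarrow> (real \<Rightarrow> real \<Rightarrow> real) \<Rightarrow> (real \<Rightarrow> real \<Rightarrow> real)
    \<Rightarrow> real \<Rightarrow> real \<Rightarrow> real \<Rightarrow> real" where
  "tau_star p hq hu xq xu t =
     (THE \<tau>. \<tau> \<in> {-xu<..<xq} \<and> s1 p hq hu xq xu t \<tau> = s2 p hq hu xq xu t \<tau>)"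

definition beta :: "real \<Rightarrow> real \<Rightarrow> real \<Rightarrow> real" where
  "beta xq xu c = (xu + c) / (xq + xu)"

definition tau_d1 :: "real \<Rightarrow> (real \<Rightarrow> real \<Rightarrow> real) \<Rightarrow> (real \<Rightarrow> real \<Rightarrow> real)
    \<Rightarrow> real \<Rightarrow> real \<Rightarrow> real \<Rightarrow> real \<Rightarrow> real" where
  "tau_d1 p hq hu xq xu c t =
     (THE \<tau>. \<tau> \<in> {-xu<..<xq} \<and> s1 p hq hu xq xu t \<tau> = beta xq xu c)"

definition tau_d2 :: "real \<Rightarrow> (real \<Rightarrow> real \<Rightarrow> real) \<Rightarrow> (real \<Rightarrow> real \<Rightarrow> real)
    \<Rightarrow> real \<Rightarrow> real \<Rightarrow> real \<Rightarrow> real \<Rightarrow> real" where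
  "tau_d2 p hq hu xq xu c t =
     (THE \<tau>. \<tau> \<in> {-xu<..<xq} \<and> s2 p hq hu xq xu t \<tau> = beta xq xu c)"

text \<open>Standing assumptions: pi in (0,1); hq, hu strictly positive probability densities
  on R^2 whose sections g \<mapsto> h t g are integrable (so conditioning on Theta = t makes sense);
  monotone likelihood ratio assumption; positive payoffs.\<close>
definition model :: "real \<Rightarrow> (real \<Rightarrow> real \<Rightarrow> real) \<Rightarrow> (real \<Rightarrow> real \<Rightarrow> real)
    \<Rightarrow> real \<Rightarrow> real \<Rightarrow> bool" where
  "model p hq hu xq xu \<longleftrightarrow>
     0 < p \<and> p < 1 \<and> 0 < xq \<and> 0 < xu \<and>
     (\<forall>t g. 0 < hq t g) \<and> (\<forall>t g. 0 < hu t g) \<and>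
     integrable (lborel :: (real \<times> real) measure) (\<lambda>(t, g). hq t g) \<and>
     integrable (lborel :: (real \<times> real) measure) (\<lambda>(t, g). hu t g) \<and>
     integral\<^sup>L (lborel :: (real \<times> real) measure) (\<lambda>(t, g). hq t g) = 1 \<and>
     integral\<^sup>L (lborel :: (real \<times> real) measure) (\<lambda>(t, g). hu t g) = 1 \<and>
     (\<forall>t. integrable lborel (hq t)) \<and> (\<forall>t. integrable lborel (hu t)) \<and>
     continuous_on UNIV (\<lambda>(t, g). lr hq hu t g) \<and>
     (\<forall>g. strict_mono (\<lambda>t. lr hq hu t g)) \<and>
     (\<forall>t. strict_mono (\<lambda>g. lr hq hu t g)) \<and>
     (\<forall>t. (INF g. lr hq hu t g) = 0 \<and> \<not> bdd_above (range (\<lambda>g. lr hq hu t g)))"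

end

theory Submission
  imports Defs
begin

text \<open>
  Fix \<theta> and write L for the section \<gamma> \<mapsto> l(\<theta>, \<gamma>), a continuous increasing bijection
  onto (0, \<infinity>). The event A(\<tau>) is the super-level set {L > T} with T = thr(\<tau>), and thr is
  an increasing bijection of (-x_u, x_q) onto (0, \<infinity>). As T grows, the mass of both
  densities on {L > T} strictly decreases, so s2 decreases from 1 to 0; and the ratio of the two
  masses, hence the posterior s1, strictly increases, because the band {T < L \<le> T'} that is
  removed has ratio at most T' while everything that remains has ratio above T'.
  Thus s1 - s2 is strictly increasing and continuous in \<tau>. If s1(\<tau>1) = \<beta> = s2(\<tau>2),
  then s1 - s2 is negative at min \<tau>1 \<tau>2 and positive at max \<tau>1 \<tau>2, so its unique zero
  \<tau>* lies strictly in between. The level \<beta> is attained by s1 because s1 \<rightarrow> \<phi>(\<theta>) < \<beta> as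
  T \<rightarrow> 0, while at the cutoff s1 exceeds \<beta>, which is the posterior given L = thr(c).
\<close>


subsection \<open>Crossing of an increasing and a decreasing function\<close>

lemma the_eq_if_inj_on:
  assumes "inj_on f A" "x \<in> A" "f x = y"
  shows "(THE x. x \<in> A \<and> f x = y) = x"
  using assms by (auto dest: inj_onD)

lemma the_crossing_between:
  fixes u v :: "real \<Rightarrow> real"
  assumes u: "strict_mono_on I u" and v: "strict_antimono_on I v"
    and cont: "continuous_on I u" "continuous_on I v"
    and ab: "{min a b..max a b} \<subseteq> I" "a \<noteq> b" "u a = v b"
  shows "(THE x. x \<in> I \<and> u x = v x) \<in> {min a b<..<max a b}"
proof -
  define d where "d x = u x - v x" for x
  have d_mono: "strict_mono_on I d"
    using u v by (auto simp: d_def monotone_on_def intro!: diff_strict_mono)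
  have "a \<in> I" "b \<in> I" using ab(1) by auto
  have "d (min a b) < 0 \<and> 0 < d (max a b)"
  proof (cases "a < b")
    case True
    then have "v b < v a" "u a < u b"
      using \<open>a \<in> I\<close> \<open>b \<in> I\<close> strict_mono_onD[OF u] monotone_onD[OF v] by auto
    with True show ?thesis using ab(3) by (simp add: d_def)
  next
    case False
    then have "b < a" using ab(2) by simp
    then have "v a < v b" "u b < u a"
      using \<open>a \<in> I\<close> \<open>b \<in> I\<close> strict_mono_onD[OF u] monotone_onD[OF v] by auto
    with \<open>b < a\<close> show ?thesis using ab(3) by (simp add: d_def)
  qed
  moreover have "continuous_on {min a b..max a b} d"
    unfolding d_def using cont ab(1) by (intro continuous_intros) (auto elim: continuous_on_subset)
  ultimately have "\<exists>x. min a b \<le> x \<and> x \<le> max a b \<and> d x = 0"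
    by (intro IVT') auto
  then obtain x where x: "min a b \<le> x" "x \<le> max a b" "d x = 0" by blast
  with \<open>d (min a b) < 0 \<and> 0 < d (max a b)\<close> have "x \<in> {min a b<..<max a b}"
    by (auto simp: order_le_less)
  moreover have "(THE x. x \<in> I \<and> u x = v x) = x"
  proof (rule the_equality)
    show "x \<in> I \<and> u x = v x" using x ab(1) by (auto simp: d_def)
    show "y = x" if "y \<in> I \<and> u y = v y" for y
    proof (rule inj_onD[OF strict_mono_on_imp_inj_on[OF d_mono]])
      show "d y = d x" using that x by (simp add: d_def)
    qed (use that x ab(1) in auto)
  qed
  ultimately show ?thesis by simp
qed

definition posterior :: "real \<Rightarrow> real \<Rightarrow> real \<Rightarrow> real" where
  "posterior p a b = p * a / (p * a + (1 - p) * b)"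

lemma posterior_less_posterior:
  fixes p a b a' b' :: real
  assumes p: "0 < p" "p < 1" and pos: "0 < a" "0 < b" "0 < a'" "0 < b'"
    and ratio: "a * b' < a' * b"
  shows "posterior p a b < posterior p a' b'"
proof -
  have "p * (1 - p) * (a * b') < p * (1 - p) * (a' * b)"
    using ratio p by (intro mult_strict_left_mono) auto
  moreover have "0 < p * a + (1 - p) * b" "0 < p * a' + (1 - p) * b'"
    using p pos by (auto intro!: add_pos_pos)
  ultimately show ?thesis
    by (simp add: posterior_def divide_simps algebra_simps)
qed

lemma thr_pos: "0 < p \<Longrightarrow> p < 1 \<Longrightarrow> -xu < \<tau> \<Longrightarrow> \<tau> < xq \<Longrightarrow> 0 < thr p xq xu \<tau>"
  unfolding thr_def by (simp add: divide_pos_pos)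

lemma thr_strict_mono_on:
  assumes "0 < p" "p < 1"
  shows "strict_mono_on {-xu<..<xq} (thr p xq xu)"
proof (rule strict_mono_onI)
  fix s t assume st: "s \<in> {-xu<..<xq}" "t \<in> {-xu<..<xq}" "s < t"
  have "(xu + t) * (xq - s) - (xu + s) * (xq - t) = (t - s) * (xq + xu)"
    by (simp add: algebra_simps)
  also have "\<dots> > 0" using st by (intro mult_pos_pos) auto
  finally have "(p * (1 - p)) * ((xu + s) * (xq - t)) < (p * (1 - p)) * ((xu + t) * (xq - s))"
    using assms by (intro mult_strict_left_mono) auto
  then show "thr p xq xu s < thr p xq xu t"
    using assms st by (simp add: thr_def divide_simps algebra_simps)
qed

lemma continuous_on_thr: "0 < p \<Longrightarrow> continuous_on {-xu<..<xq} (thr p xq xu)"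
  unfolding thr_def by (intro continuous_intros) auto

lemma thr_surj:
  assumes p: "0 < p" "p < 1" and "0 < xq" "0 < xu" "0 < T"
  shows "\<exists>\<tau>\<in>{-xu<..<xq}. thr p xq xu \<tau> = T"
proof -
  define D where "D = p * T + (1 - p)"
  have D: "0 < D" using p \<open>0 < T\<close> by (simp add: D_def add_pos_pos)
  define \<tau> where "\<tau> = (p * T * xq - (1 - p) * xu) / D"
  have up: "xu + \<tau> = p * T * (xq + xu) / D" and down: "xq - \<tau> = (1 - p) * (xq + xu) / D"
    using D by (simp_all add: \<tau>_def D_def field_simps)
  have "0 < xu + \<tau>" "0 < xq - \<tau>"
    unfolding up down using assms D by (intro divide_pos_pos mult_pos_pos; simp)+
  moreover have "thr p xq xu \<tau> = T"
  proof -
    have "(1 - p) * (p * T * (xq + xu) / D) = T * (p * ((1 - p) * (xq + xu) / D))" by simp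
    moreover have "p * ((1 - p) * (xq + xu) / D) \<noteq> 0" using assms D by auto
    ultimately show ?thesis unfolding thr_def up down by simp
  qed
  ultimately show ?thesis by force
qed

lemma posterior_thr_cutoff:
  assumes "0 < p" "p < 1" "-xu < c" "c < xq"
  shows "posterior p (thr p xq xu c) 1 = beta xq xu c"
proof -
  have odds: "p * thr p xq xu c = (1 - p) * (xu + c) / (xq - c)"
    using assms by (simp add: thr_def)
  have "(1 - p) * (xu + c) / (xq - c) + (1 - p) = (1 - p) * (xq + xu) / (xq - c)"
    using assms by (simp add: field_simps)
  moreover have "1 - p \<noteq> 0" "xq - c \<noteq> 0" "xq + xu \<noteq> 0" using assms by auto
  ultimately show ?thesis
    unfolding posterior_def beta_def odds by simp
qed

subsection \<open>Upper tails of a likelihood-ratio section\<close>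

lemma integrable_imp_set_integrable:
  fixes h :: "'a \<Rightarrow> 'b::{banach, second_countable_topology}"
  shows "A \<in> sets M \<Longrightarrow> integrable M h \<Longrightarrow> set_integrable M A h"
  unfolding set_integrable_def by (rule integrable_mult_indicator)

lemma set_integral_pos_of_open_subset:
  fixes h :: "real \<Rightarrow> real"
  assumes A: "A \<in> sets lborel" and h: "integrable lborel h" and h_pos: "\<forall>x\<in>A. 0 < h x"
    and U: "open U" "U \<noteq> {}" "U \<subseteq> A"
  shows "0 < (LINT x:A|lborel. h x)"
proof -
  obtain x0 e where e: "0 < e" "ball x0 e \<subseteq> U"
    using U(1,2) open_contains_ball by blast
  have box: "{x0-e<..<x0+e} \<subseteq> A" using e U(3) by (auto simp: dist_real_def subset_iff)
  have int: "integrable lborel (\<lambda>x. indicator A x *\<^sub>R h x)"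
    using A h by (rule integrable_mult_indicator)
  have nonneg: "AE x in lborel. 0 \<le> indicator A x *\<^sub>R h x"
    using h_pos by (auto simp: indicator_def less_imp_le)
  have "(LINT x:A|lborel. h x) \<noteq> 0"
  proof
    assume "(LINT x:A|lborel. h x) = 0"
    then have "AE x in lborel. indicator A x *\<^sub>R h x = 0"
      using integral_nonneg_eq_0_iff_AE[OF int nonneg] by (simp add: set_lebesgue_integral_def)
    then have "AE x in lborel. x \<notin> {x0-e<..<x0+e}"
      by eventually_elim (use box h_pos in \<open>force simp: indicator_def\<close>)
    then have "emeasure lborel {x0-e<..<x0+e} = 0"
      by (subst (asm) AE_iff_measurable[of "{x0-e<..<x0+e}"]) auto
    then show False using e by simp
  qed
  moreover have "0 \<le> (LINT x:A|lborel. h x)"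
    unfolding set_lebesgue_integral_def using nonneg by (rule integral_nonneg_AE)
  ultimately show ?thesis by simp
qed

locale lr_section =
  fixes f g :: "real \<Rightarrow> real" and p :: real
  assumes f_pos: "\<And>x. 0 < f x" and g_pos: "\<And>x. 0 < g x"
    and f_integrable: "integrable lborel f" and g_integrable: "integrable lborel g"
    and ratio_continuous: "continuous_on UNIV (\<lambda>x. f x / g x)"
    and ratio_strict_mono: "strict_mono (\<lambda>x. f x / g x)"
    and ratio_INF: "(INF x. f x / g x) = 0"
    and ratio_unbounded: "\<not> bdd_above (range (\<lambda>x. f x / g x))"
    and prior: "0 < p" "p < 1"
begin

definition L :: "real \<Rightarrow> real" where "L x = f x / g x"

definition tail :: "(real \<Rightarrow> real) \<Rightarrow> real \<Rightarrow> real" where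
  "tail h T = (LINT x:{x. T < L x}|lborel. h x)"

definition band :: "(real \<Rightarrow> real) \<Rightarrow> real \<Rightarrow> real \<Rightarrow> real" where
  "band h T T' = (LINT x:{x. T < L x \<and> L x \<le> T'}|lborel. h x)"

definition precision :: "real \<Rightarrow> real" where
  "precision T = posterior p (tail f T) (tail g T)"

definition acceptance :: "real \<Rightarrow> real" where
  "acceptance T = (p * tail f T + (1 - p) * tail g T) /
     (p * integral\<^sup>L lborel f + (1 - p) * integral\<^sup>L lborel g)"

lemma L_pos: "0 < L x"
  using f_pos g_pos by (simp add: L_def)

lemma isCont_L: "isCont L x"
  using ratio_continuous unfolding L_def[abs_def] by (simp add: continuous_on_eq_continuous_at)

lemma L_strict_mono: "strict_mono L"
  using ratio_strict_mono by (simp add: L_def[abs_def])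

lemma continuous_on_L: "continuous_on S L"
  using isCont_L by (simp add: continuous_at_imp_continuous_on)

lemma L_surj:
  assumes "0 < a"
  shows "\<exists>x. L x = a"
proof -
  have "bdd_below (range L)" using L_pos by (auto intro!: bdd_belowI[of _ 0] less_imp_le)
  moreover have "(INF x. L x) < a" using ratio_INF assms by (simp add: L_def[abs_def])
  ultimately obtain x1 where x1: "L x1 < a" by (auto simp: cINF_less_iff)
  obtain x2 where x2: "a < L x2"
    using ratio_unbounded unfolding L_def[abs_def] bdd_above_def by (auto simp: not_le)
  have "\<not> x2 < x1" using strict_monoD[OF L_strict_mono, of x2 x1] x1 x2 by linarith
  then have "\<exists>x. x1 \<le> x \<and> x \<le> x2 \<and> L x = a"
    using x1 x2 by (intro IVT' continuous_on_L) auto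
  then show ?thesis by blast
qed

lemma L_measurable[measurable]: "L \<in> borel_measurable borel"
  by (intro borel_measurable_continuous_onI continuous_on_L)

lemma superlevel_nonempty: "{x. T < L x} \<noteq> {}"
proof -
  have "0 < max 1 (T + 1)" by simp
  then obtain x where "L x = max 1 (T + 1)" using L_surj by blast
  then have "x \<in> {x. T < L x}" by simp
  then show ?thesis by blast
qed

lemma open_superlevel: "open {x. T < L x}"
  by (intro open_Collect_less continuous_on_L continuous_on_const)

lemma closed_sublevel: "closed {x. L x \<le> T'}"
  by (intro closed_Collect_le continuous_on_L continuous_on_const)

lemma tail_pos:
  assumes "integrable lborel h" "\<And>x. 0 < h x"
  shows "0 < tail h T"
  unfolding tail_def using assms superlevel_nonempty open_superlevel
  by (intro set_integral_pos_of_open_subset[where U="{x. T < L x}"]) auto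

lemma tail_nonpos: "T \<le> 0 \<Longrightarrow> tail h T = integral\<^sup>L lborel h"
  unfolding tail_def set_lebesgue_integral_def using L_pos by (simp add: order_le_less_trans[of T 0])

lemma tail_split:
  assumes "T < T'" "integrable lborel h"
  shows "tail h T = band h T T' + tail h T'"
proof -
  have "{x. T < L x} = {x. T < L x \<and> L x \<le> T'} \<union> {x. T' < L x}" using assms by auto
  then show ?thesis unfolding tail_def band_def using assms
    by (simp only:) (rule set_integral_Un, auto intro!: integrable_imp_set_integrable)
qed

lemma band_pos:
  assumes "0 \<le> T" "T < T'" "integrable lborel h" "\<And>x. 0 < h x"
  shows "0 < band h T T'"
proof -
  have "0 < (T + T') / 2" using assms(1,2) by simp
  then obtain x where "L x = (T + T') / 2" using L_surj by blast
  then have "x \<in> {x. T < L x \<and> L x < T'}" using assms(2) by simp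
  then have "{x. T < L x \<and> L x < T'} \<noteq> {}" by blast
  moreover have "open {x. T < L x \<and> L x < T'}"
    by (intro open_Collect_conj open_Collect_less continuous_on_L continuous_on_const)
  moreover have "{x. T < L x \<and> L x \<le> T'} \<in> sets lborel"
    using borel_open[OF open_superlevel] borel_closed[OF closed_sublevel] by (simp add: Collect_conj_eq)
  ultimately show ?thesis unfolding band_def using assms(3,4)
    by (intro set_integral_pos_of_open_subset[where U="{x. T < L x \<and> L x < T'}"]) auto
qed

lemma tail_strict_antimono:
  assumes "0 \<le> T" "T < T'" "integrable lborel h" "\<And>x. 0 < h x"
  shows "tail h T' < tail h T"
  using tail_split[OF assms(2,3)] band_pos[OF assms] by simp

lemma tail_ratio_gt: "T * tail g T < tail f T"
proof -
  have "0 < (LINT x:{x. T < L x}|lborel. f x - T * g x)"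
    using f_integrable g_integrable g_pos superlevel_nonempty open_superlevel
    by (intro set_integral_pos_of_open_subset[where U="{x. T < L x}"]) (auto simp: L_def field_simps)
  also have "\<dots> = tail f T - T * tail g T"
    unfolding tail_def using f_integrable g_integrable
    by (subst set_integral_diff(2)) (auto intro!: integrable_imp_set_integrable)
  finally show ?thesis by simp
qed

lemma band_ratio_le: "band f T T' \<le> T' * band g T T'"
proof -
  have "band f T T' \<le> (LINT x:{x. T < L x \<and> L x \<le> T'}|lborel. T' * g x)"
    unfolding band_def using f_integrable g_integrable g_pos
    by (intro set_integral_mono integrable_imp_set_integrable) (auto simp: L_def field_simps)
  then show ?thesis by (simp add: band_def)
qed

lemma tail_ratio_strict_mono:
  assumes "0 \<le> T" "T < T'"
  shows "tail f T * tail g T' < tail f T' * tail g T"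
proof -
  have "tail g T' * band f T T' \<le> tail g T' * (T' * band g T T')"
    using band_ratio_le less_imp_le[OF tail_pos[OF g_integrable g_pos]] by (rule mult_left_mono)
  also have "\<dots> = (T' * tail g T') * band g T T'" by simp
  also have "\<dots> < tail f T' * band g T T'"
    using tail_ratio_gt band_pos[OF assms g_integrable g_pos] by (intro mult_strict_right_mono)
  finally show ?thesis
    unfolding tail_split[OF assms(2) f_integrable] tail_split[OF assms(2) g_integrable]
    by (simp add: algebra_simps)
qed

lemma isCont_tail:
  assumes h: "integrable lborel h"
  shows "isCont (tail h) T0"
proof -
  have "AE x in lborel. x \<notin> {x. L x = T0}"
  proof (cases "\<exists>a. L a = T0")
    case True
    then obtain a where "L a = T0" by blast
    then have "{x. L x = T0} = {a}"
      using strict_mono_eq[OF L_strict_mono] by auto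
    then show ?thesis using AE_lborel_singleton[of a] by simp
  qed simp
  have "(\<lambda>i. tail h (X i)) \<longlonglongrightarrow> tail h T0" if X: "X \<longlonglongrightarrow> T0" for X
    unfolding tail_def set_lebesgue_integral_def
  proof (rule integral_dominated_convergence[where w="\<lambda>x. norm (h x)"])
    show "AE x in lborel. (\<lambda>i. indicator {x. X i < L x} x *\<^sub>R h x) \<longlonglongrightarrow> indicator {x. T0 < L x} x *\<^sub>R h x"
      using \<open>AE x in lborel. x \<notin> {x. L x = T0}\<close>
    proof eventually_elim
      case (elim x)
      then consider "T0 < L x" | "L x < T0" by (auto simp: neq_iff)
      then have "eventually (\<lambda>i. X i < L x \<longleftrightarrow> T0 < L x) sequentially"
      proof cases
        case 1
        with order_tendstoD(2)[OF X 1] show ?thesis by (auto elim: eventually_mono)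
      next
        case 2
        with order_tendstoD(1)[OF X 2] show ?thesis by (auto elim: eventually_mono)
      qed
      then show ?case
        by (rule tendsto_eventually[OF eventually_mono]) (auto simp: indicator_def)
    qed
  qed (use h in \<open>auto simp: indicator_def\<close>)
  then show ?thesis by (simp add: isCont_def tendsto_at_iff_sequentially comp_def)
qed

lemma tail_tendsto_zero:
  assumes h: "integrable lborel h"
  shows "(\<lambda>n. tail h (real n)) \<longlonglongrightarrow> 0"
proof -
  have "(\<lambda>n. tail h (real n)) \<longlonglongrightarrow> integral\<^sup>L lborel (\<lambda>x::real. 0 :: real)"
    unfolding tail_def set_lebesgue_integral_def
  proof (rule integral_dominated_convergence[where w="\<lambda>x. norm (h x)"])
    show "AE x in lborel. (\<lambda>n. indicator {x. real n < L x} x *\<^sub>R h x) \<longlonglongrightarrow> 0"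
    proof (rule AE_I2)
      fix x
      obtain N :: nat where "L x < N" using reals_Archimedean2 by blast
      then have "eventually (\<lambda>n. indicator {x. real n < L x} x *\<^sub>R h x = 0) sequentially"
        unfolding eventually_sequentially by (intro exI[of _ N]) (auto simp: indicator_def)
      then show "(\<lambda>n. indicator {x. real n < L x} x *\<^sub>R h x) \<longlonglongrightarrow> 0"
        by (rule tendsto_eventually)
    qed
  qed (use h in \<open>auto simp: indicator_def\<close>)
  then show ?thesis by simp
qed

lemma marginal_pos: "0 < p * integral\<^sup>L lborel f + (1 - p) * integral\<^sup>L lborel g"
  using tail_pos[OF f_integrable f_pos, of 0] tail_pos[OF g_integrable g_pos, of 0] prior
  by (simp add: tail_nonpos add_pos_pos)

subsection \<open>Precision and acceptance rate as functions of the threshold\<close>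

lemma precision_strict_mono_on: "strict_mono_on {0..} precision"
proof (rule strict_mono_onI)
  fix T T' :: real assume "T \<in> {0..}" "T < T'"
  then show "precision T < precision T'"
    unfolding precision_def using tail_ratio_strict_mono[of T T']
    by (intro posterior_less_posterior prior tail_pos f_integrable g_integrable f_pos g_pos) auto
qed

lemma acceptance_strict_antimono_on: "strict_antimono_on {0..} acceptance"
proof (rule monotone_onI)
  fix T T' :: real assume "T \<in> {0..}" "T < T'"
  then have "tail f T' < tail f T" "tail g T' < tail g T"
    using tail_strict_antimono f_integrable f_pos g_integrable g_pos by auto
  then have "p * tail f T' + (1 - p) * tail g T' < p * tail f T + (1 - p) * tail g T"
    using prior by (intro add_strict_mono mult_strict_left_mono) auto
  then show "acceptance T' < acceptance T"
    unfolding acceptance_def using marginal_pos by (rule divide_strict_right_mono)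
qed

lemma continuous_on_precision: "continuous_on S precision"
proof -
  have "0 < p * tail f T + (1 - p) * tail g T" for T
    using prior tail_pos f_integrable f_pos g_integrable g_pos by (intro add_pos_pos) auto
  then show ?thesis
    unfolding precision_def[abs_def] posterior_def
    by (intro continuous_at_imp_continuous_on ballI continuous_intros isCont_tail
        f_integrable g_integrable) (metis less_irrefl)
qed

lemma continuous_on_acceptance: "continuous_on S acceptance"
  unfolding acceptance_def[abs_def] using marginal_pos
  by (intro continuous_at_imp_continuous_on ballI continuous_intros isCont_tail
      f_integrable g_integrable) auto

lemma posterior_less_precision: "0 < T \<Longrightarrow> posterior p T 1 < precision T"
  unfolding precision_def
  using tail_ratio_gt[of T] tail_pos f_integrable f_pos g_integrable g_pos
  by (intro posterior_less_posterior prior) auto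

lemma precision_attains:
  assumes "posterior p (integral\<^sup>L lborel f) (integral\<^sup>L lborel g) < \<beta>" "0 < T" "\<beta> < precision T"
  shows "\<exists>T'>0. precision T' = \<beta>"
proof -
  have "precision 0 < \<beta>" using assms(1) by (simp add: precision_def tail_nonpos)
  then obtain T' where "0 \<le> T'" "T' \<le> T" "precision T' = \<beta>"
    using IVT'[of precision 0 \<beta> T] assms(2,3) continuous_on_precision by auto
  with \<open>precision 0 < \<beta>\<close> show ?thesis by (auto simp: order_le_less)
qed

lemma acceptance_attains:
  assumes "0 < \<beta>" "\<beta> < 1"
  shows "\<exists>T>0. acceptance T = \<beta>"
proof -
  have "(\<lambda>n. acceptance (real n)) \<longlonglongrightarrow> (p * 0 + (1 - p) * 0) /
      (p * integral\<^sup>L lborel f + (1 - p) * integral\<^sup>L lborel g)"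
    unfolding acceptance_def
    by (intro tendsto_intros tail_tendsto_zero f_integrable g_integrable) (use marginal_pos in auto)
  then obtain n where n: "acceptance (real n) < \<beta>"
    using order_tendstoD(2)[of _ 0 _ \<beta>] assms(1) by (force simp: eventually_sequentially)
  have "acceptance 0 = 1" using marginal_pos by (simp add: acceptance_def tail_nonpos)
  then obtain T where "0 \<le> T" "T \<le> real n" "acceptance T = \<beta>"
    using IVT2'[of acceptance "real n" \<beta> 0] n assms continuous_on_acceptance by auto
  with \<open>acceptance 0 = 1\<close> assms(2) show ?thesis by (auto simp: order_le_less)
qed

end

subsection \<open>The screening quantities at a fixed \<theta>\<close>

lemma model_lr_section:
  assumes "model p hq hu xq xu"
  shows "lr_section (hq \<theta>) (hu \<theta>) p"
proof -
  have "continuous_on UNIV ((\<lambda>(t, g). lr hq hu t g) \<circ> Pair \<theta>)"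
    using assms unfolding model_def
    by (intro continuous_on_compose continuous_intros) (auto elim: continuous_on_subset)
  then show ?thesis
    using assms unfolding model_def by unfold_locales (auto simp: lr_def[abs_def] o_def)
qed

context
  fixes p xq xu \<theta> :: real and hq hu :: "real \<Rightarrow> real \<Rightarrow> real"
  assumes model: "model p hq hu xq xu"
begin

interpretation lr_section "hq \<theta>" "hu \<theta>" p
  using model by (rule model_lr_section)

lemma model_bounds: "0 < p" "p < 1" "0 < xq" "0 < xu"
  using model by (auto simp: model_def)

lemma s1_eq_precision: "s1 p hq hu xq xu \<theta> = precision \<circ> thr p xq xu"
  by (simp add: fun_eq_iff Let_def s1_def acc_set_def precision_def posterior_def tail_def L_def lr_def)

lemma s2_eq_acceptance: "s2 p hq hu xq xu \<theta> = acceptance \<circ> thr p xq xu"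
  by (simp add: fun_eq_iff Let_def s2_def acc_set_def acceptance_def tail_def L_def lr_def)

lemma thr_image_nonneg: "thr p xq xu ` {-xu<..<xq} \<subseteq> {0..}"
  using thr_pos model_bounds by (auto intro: less_imp_le)

lemma s1_strict_mono_on: "strict_mono_on {-xu<..<xq} (s1 p hq hu xq xu \<theta>)"
  unfolding s1_eq_precision
  by (rule monotone_on_o[OF precision_strict_mono_on thr_strict_mono_on[OF model_bounds(1,2)] thr_image_nonneg])

lemma s2_strict_antimono_on: "strict_antimono_on {-xu<..<xq} (s2 p hq hu xq xu \<theta>)"
  unfolding s2_eq_acceptance
  by (rule monotone_on_o[OF acceptance_strict_antimono_on thr_strict_mono_on[OF model_bounds(1,2)] thr_image_nonneg])

lemma continuous_on_s1: "continuous_on {-xu<..<xq} (s1 p hq hu xq xu \<theta>)"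
  unfolding s1_eq_precision
  by (intro continuous_on_compose continuous_on_thr continuous_on_precision model_bounds)

lemma continuous_on_s2: "continuous_on {-xu<..<xq} (s2 p hq hu xq xu \<theta>)"
  unfolding s2_eq_acceptance
  by (intro continuous_on_compose continuous_on_thr continuous_on_acceptance model_bounds)

lemma s1_attains_beta:
  assumes c: "-xu < c" "c < xq" and "phi p hq hu \<theta> < beta xq xu c"
  shows "\<exists>\<tau>\<in>{-xu<..<xq}. s1 p hq hu xq xu \<theta> \<tau> = beta xq xu c"
proof -
  have "phi p hq hu \<theta> = posterior p (integral\<^sup>L lborel (hq \<theta>)) (integral\<^sup>L lborel (hu \<theta>))"
    by (simp add: phi_def posterior_def)
  moreover have "beta xq xu c < precision (thr p xq xu c)"
    using posterior_less_precision thr_pos posterior_thr_cutoff model_bounds c by metis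
  ultimately obtain T where "0 < T" "precision T = beta xq xu c"
    using precision_attains assms(3) thr_pos model_bounds c by metis
  then show ?thesis using thr_surj model_bounds by (fastforce simp: s1_eq_precision)
qed

lemma s2_attains_beta:
  assumes "-xu < c" "c < xq"
  shows "\<exists>\<tau>\<in>{-xu<..<xq}. s2 p hq hu xq xu \<theta> \<tau> = beta xq xu c"
proof -
  have "0 < beta xq xu c" "beta xq xu c < 1"
    using assms model_bounds by (auto simp: beta_def field_simps)
  then obtain T where "0 < T" "acceptance T = beta xq xu c" using acceptance_attains by blast
  then show ?thesis using thr_surj model_bounds by (fastforce simp: s2_eq_acceptance)
qed

end

theorem mainTheorem11:
  fixes p xq xu c \<theta> :: real and hq hu :: "real \<Rightarrow> real \<Rightarrow> real"
  assumes "model p hq hu xq xu"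
    and "-xu < c" and "c < xq"
    and "phi p hq hu \<theta> < beta xq xu c"
  shows "(tau_d1 p hq hu xq xu c \<theta> < tau_d2 p hq hu xq xu c \<theta> \<longrightarrow>
            tau_star p hq hu xq xu \<theta> \<in> {tau_d1 p hq hu xq xu c \<theta> <..< tau_d2 p hq hu xq xu c \<theta>})
       \<and> (tau_d2 p hq hu xq xu c \<theta> < tau_d1 p hq hu xq xu c \<theta> \<longrightarrow>
            tau_star p hq hu xq xu \<theta> \<in> {tau_d2 p hq hu xq xu c \<theta> <..< tau_d1 p hq hu xq xu c \<theta>})"
proof -
  let ?s1 = "s1 p hq hu xq xu \<theta>" and ?s2 = "s2 p hq hu xq xu \<theta>"
  obtain \<tau>1 where \<tau>1: "\<tau>1 \<in> {-xu<..<xq}" "?s1 \<tau>1 = beta xq xu c"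
    using s1_attains_beta assms by blast
  obtain \<tau>2 where \<tau>2: "\<tau>2 \<in> {-xu<..<xq}" "?s2 \<tau>2 = beta xq xu c"
    using s2_attains_beta assms by blast
  have "tau_d1 p hq hu xq xu c \<theta> = \<tau>1"
    unfolding tau_d1_def using \<tau>1 s1_strict_mono_on[OF assms(1)]
    by (intro the_eq_if_inj_on strict_mono_on_imp_inj_on)
  moreover have "tau_d2 p hq hu xq xu c \<theta> = \<tau>2"
    unfolding tau_d2_def using \<tau>2 s2_strict_antimono_on[OF assms(1)]
    by (intro the_eq_if_inj_on) (auto simp: strict_antimono_iff_antimono)
  moreover have "\<tau>1 \<noteq> \<tau>2 \<Longrightarrow> tau_star p hq hu xq xu \<theta> \<in> {min \<tau>1 \<tau>2<..<max \<tau>1 \<tau>2}"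
    unfolding tau_star_def using \<tau>1 \<tau>2 assms(1)
    by (intro the_crossing_between s1_strict_mono_on s2_strict_antimono_on
        continuous_on_s1 continuous_on_s2) auto
  ultimately show ?thesis by (auto simp: min_def max_def)
qed

end
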